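(* Let $G$ be a connected graph, let $u,v\in V(G)$, and let $u=w_0,w_1,\dots,w_k=v$ with $k\geq 2$ be an internal path between $u$ and $v$, i.e. $w_iw_{i+1}\in E(G)$ for $0\le i\le k-1$ and each of $w_1,\dots,w_{k-1}$ has degree two in $G$. Let $H=G-w_1-\dots-w_{k-1}$ be the graph obtained by deleting $w_1,\dots,w_{k-1}$ from $G$. Then the sequence $Tr_G(w_0),Tr_G(w_1),\dots,Tr_G(w_k)$ is unimodal if $H$ is connected, and inversely unimodal if $H$ is disconnected.
   Context: $Tr_G(x)=\sum_{y\in V(G)} d_G(x,y)$ is the transmission of $x$, where $d_G$ is the shortest-path distance. A sequence $s_1,\dots,s_m$ is unimodal if there is $t\in\{1,\dots,m\}$ with $s_1\le\dots\le s_t\ge s_{t+1}\ge\dots\ge s_m$, and inversely unimodal if there is $t$ with $s_1\ge\dots\ge s_t\le s_{t+1}\le\dots\le s_m$. *)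

theory Defs
  imports Main
begin

definition simple_graph :: "'a set \<Rightarrow> ('a \<Rightarrow> 'a \<Rightarrow> bool) \<Rightarrow> bool" where
  "simple_graph V E \<longleftrightarrow> finite V \<and> (\<forall>x y. E x y \<longrightarrow> x \<in> V \<and> y \<in> V)
     \<and> (\<forall>x y. E x y \<longrightarrow> E y x) \<and> (\<forall>x. \<not> E x x)"

definition is_walk :: "'a set \<Rightarrow> ('a \<Rightarrow> 'a \<Rightarrow> bool) \<Rightarrow> 'a list \<Rightarrow> bool" where
  "is_walk V E xs \<longleftrightarrow> xs \<noteq> [] \<and> set xs \<subseteq> V \<and>
     (\<forall>i. i + 1 < length xs \<longrightarrow> E (xs ! i) (xs ! (i + 1)))"

definition reachable :: "'a set \<Rightarrow> ('a \<Rightarrow> 'a \<Rightarrow> bool) \<Rightarrow> 'a \<Rightarrow> 'a \<Rightarrow> bool" where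
  "reachable V E x y \<longleftrightarrow> (\<exists>xs. is_walk V E xs \<and> hd xs = x \<and> last xs = y)"

definition graph_connected :: "'a set \<Rightarrow> ('a \<Rightarrow> 'a \<Rightarrow> bool) \<Rightarrow> bool" where
  "graph_connected V E \<longleftrightarrow> V \<noteq> {} \<and> (\<forall>x\<in>V. \<forall>y\<in>V. reachable V E x y)"

definition gdist :: "'a set \<Rightarrow> ('a \<Rightarrow> 'a \<Rightarrow> bool) \<Rightarrow> 'a \<Rightarrow> 'a \<Rightarrow> nat" where
  "gdist V E x y = (LEAST n. \<exists>xs. is_walk V E xs \<and> hd xs = x \<and> last xs = y \<and> length xs = n + 1)"

definition transmission :: "'a set \<Rightarrow> ('a \<Rightarrow> 'a \<Rightarrow> bool) \<Rightarrow> 'a \<Rightarrow> nat" where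
  "transmission V E x = (\<Sum>y\<in>V. gdist V E x y)"

definition degree :: "'a set \<Rightarrow> ('a \<Rightarrow> 'a \<Rightarrow> bool) \<Rightarrow> 'a \<Rightarrow> nat" where
  "degree V E x = card {y\<in>V. E x y}"

definition del_vertices_edges :: "('a \<Rightarrow> 'a \<Rightarrow> bool) \<Rightarrow> 'a set \<Rightarrow> 'a \<Rightarrow> 'a \<Rightarrow> bool" where
  "del_vertices_edges E W = (\<lambda>x y. E x y \<and> x \<notin> W \<and> y \<notin> W)"

definition unimodal :: "(nat \<Rightarrow> 'b::linorder) \<Rightarrow> nat \<Rightarrow> bool" where
  "unimodal s k \<longleftrightarrow> (\<exists>t\<le>k. (\<forall>i j. i \<le> j \<and> j \<le> t \<longrightarrow> s i \<le> s j) \<and>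
                              (\<forall>i j. t \<le> i \<and> i \<le> j \<and> j \<le> k \<longrightarrow> s j \<le> s i))"

definition inv_unimodal :: "(nat \<Rightarrow> 'b::linorder) \<Rightarrow> nat \<Rightarrow> bool" where
  "inv_unimodal s k \<longleftrightarrow> (\<exists>t\<le>k. (\<forall>i j. i \<le> j \<and> j \<le> t \<longrightarrow> s j \<le> s i) \<and>
                              (\<forall>i j. t \<le> i \<and> i \<le> j \<and> j \<le> k \<longrightarrow> s i \<le> s j))"

end

theory Submission
  imports Defs
begin

text \<open>
  Let \<open>c = w (i + 1)\<close> be an interior vertex of the path, with neighbours \<open>a = w i\<close> and
  \<open>b = w (i + 2)\<close>. A shortest path leaving \<open>c\<close> starts through \<open>a\<close> or \<open>b\<close>, so
  \<open>d(c, y) = 1 + min (d(a, y)) (d(b, y))\<close> for \<open>y \<noteq> c\<close>, and therefore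
  \<open>Tr(a) + Tr(b) - 2 Tr(c) = 2 + (\<Sum>y \<noteq> c. \<bar>d(a, y) - d(b, y)\<bar> - 2)\<close>, where each gap
  \<open>\<bar>d(a, y) - d(b, y)\<bar>\<close> is at most 2.

  Whether \<open>H\<close> is connected decides whether \<open>a\<close> and \<open>b\<close> are joined by a path avoiding \<open>c\<close>.
  If they are, the gap \<open>d(b, y) - d(a, y)\<close> moves from positive at \<open>a\<close> to negative at \<open>b\<close> in
  steps of at most 2 along that path, so it vanishes somewhere or equals \<open>\<plusminus>1\<close> at two
  vertices, and the second difference is \<open>\<le> 0\<close>. If they are not, every gap is \<open>\<plusminus>2\<close>:
  a gap of at most 1 at some \<open>y \<noteq> c\<close> would let the shortest paths from \<open>a\<close> and from \<open>b\<close>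
  to \<open>y\<close> both avoid \<open>c\<close>. Then the second difference is 2. A concave sequence is unimodal
  and a convex one inversely unimodal.
\<close>

section \<open>Walks and reachability\<close>

lemma simple_graph_edge_sym: "simple_graph V E \<Longrightarrow> E x y \<Longrightarrow> E y x"
  by (simp add: simple_graph_def)

lemma simple_graph_edge_in_V: "simple_graph V E \<Longrightarrow> E x y \<Longrightarrow> x \<in> V \<and> y \<in> V"
  by (simp add: simple_graph_def)

lemma simple_graph_del_vertices:
  "simple_graph V E \<Longrightarrow> simple_graph (V - W) (del_vertices_edges E W)"
  by (auto simp: simple_graph_def del_vertices_edges_def)

lemma is_walk_Cons_Cons:
  "is_walk V E (x # y # xs) \<longleftrightarrow> x \<in> V \<and> E x y \<and> is_walk V E (y # xs)"
  unfolding is_walk_def by (auto simp: All_less_Suc2)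

lemma is_walk_snoc:
  assumes "xs \<noteq> []"
  shows "is_walk V E (xs @ [y]) \<longleftrightarrow> is_walk V E xs \<and> E (last xs) y \<and> y \<in> V"
proof -
  have "(\<forall>i. i + 1 < length (xs @ [y]) \<longrightarrow> E ((xs @ [y]) ! i) ((xs @ [y]) ! (i + 1)))
    \<longleftrightarrow> (\<forall>i. i + 1 < length xs \<longrightarrow> E (xs ! i) (xs ! (i + 1))) \<and> E (last xs) y"
    using assms by (auto simp: nth_append last_conv_nth less_Suc_eq) (metis diff_Suc_1')
  then show ?thesis
    using assms by (auto simp: is_walk_def)
qed

lemma is_walk_take: "is_walk V E xs \<Longrightarrow> 0 < n \<Longrightarrow> is_walk V E (take n xs)"
  unfolding is_walk_def by (auto dest: in_set_takeD)

lemma is_walk_drop: "is_walk V E xs \<Longrightarrow> n < length xs \<Longrightarrow> is_walk V E (drop n xs)"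
  unfolding is_walk_def by (auto dest: in_set_dropD simp: add.assoc)

lemma is_walk_del_vertices:
  "is_walk (V - W) (del_vertices_edges E W) xs \<longleftrightarrow> is_walk V E xs \<and> set xs \<inter> W = {}"
proof -
  have "xs ! i \<notin> W" if "set xs \<inter> W = {}" "i < length xs" for i
    using that nth_mem by blast
  then show ?thesis
    unfolding is_walk_def del_vertices_edges_def by auto
qed

lemma reachable_refl: "x \<in> V \<Longrightarrow> reachable V E x x"
  unfolding reachable_def by (intro exI[of _ "[x]"]) (simp add: is_walk_def)

lemma reachable_edge: "E x y \<Longrightarrow> x \<in> V \<Longrightarrow> y \<in> V \<Longrightarrow> reachable V E x y"
  unfolding reachable_def by (intro exI[of _ "[x, y]"]) (simp add: is_walk_Cons_Cons is_walk_def)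

lemma reachable_in_V: "reachable V E x y \<Longrightarrow> x \<in> V \<and> y \<in> V"
  unfolding reachable_def is_walk_def by (metis hd_in_set last_in_set subsetD)

lemma reachable_step:
  assumes "reachable V E x y" "E y z" "z \<in> V"
  shows "reachable V E x z"
proof -
  obtain xs where xs: "is_walk V E xs" "hd xs = x" "last xs = y"
    using assms(1) by (auto simp: reachable_def)
  then have "xs \<noteq> []"
    by (simp add: is_walk_def)
  with xs assms(2,3) show ?thesis
    unfolding reachable_def by (intro exI[of _ "xs @ [z]"]) (simp add: is_walk_snoc)
qed

lemma reachable_closed:
  assumes "reachable V E x y" "P x"
    and step: "\<And>u v. P u \<Longrightarrow> E u v \<Longrightarrow> v \<in> V \<Longrightarrow> P v"
  shows "P y"
proof -
  have "P (last xs)" if "is_walk V E xs" "P (hd xs)" for xs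
    using that
  proof (induction xs rule: induct_list012)
    case (3 u v xs)
    then have "E u v" "is_walk V E (v # xs)"
      by (simp_all add: is_walk_Cons_Cons)
    moreover from this(2) have "v \<in> V"
      by (simp add: is_walk_def)
    ultimately show ?case
      using 3 step by simp
  qed (simp_all add: is_walk_def)
  then show ?thesis
    using assms(1,2) by (auto simp: reachable_def)
qed

lemma reachable_trans: "reachable V E x y \<Longrightarrow> reachable V E y z \<Longrightarrow> reachable V E x z"
  by (erule reachable_closed[of V E y z "reachable V E x"]) (auto intro: reachable_step)

lemma reachable_sym:
  assumes "simple_graph V E" "reachable V E x y"
  shows "reachable V E y x"
  using assms(2)
proof (rule reachable_closed[where P = "\<lambda>v. reachable V E v x"])
  show "reachable V E x x"
    using reachable_in_V[OF assms(2)] by (simp add: reachable_refl)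
next
  fix u v assume "reachable V E u x" "E u v" "v \<in> V"
  with assms(1) show "reachable V E v x"
    by (meson reachable_edge reachable_trans simple_graph_edge_in_V simple_graph_edge_sym)
qed

lemma reachable_del_vertices_mono:
  assumes "reachable (V - W') (del_vertices_edges E W') x y" "W \<subseteq> W'"
  shows "reachable (V - W) (del_vertices_edges E W) x y"
proof -
  obtain xs where "is_walk V E xs" "set xs \<inter> W' = {}" "hd xs = x" "last xs = y"
    using assms(1) by (auto simp: reachable_def is_walk_del_vertices)
  with assms(2) show ?thesis
    unfolding reachable_def is_walk_del_vertices by auto
qed

section \<open>Shortest-path distance\<close>

lemma gdist_le_length:
  assumes "is_walk V E xs" "hd xs = x" "last xs = y"
  shows "gdist V E x y + 1 \<le> length xs"
proof -
  have "xs \<noteq> []"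
    using assms(1) by (simp add: is_walk_def)
  then have "\<exists>ys. is_walk V E ys \<and> hd ys = x \<and> last ys = y \<and> length ys = (length xs - 1) + 1"
    using assms by auto
  then have "gdist V E x y \<le> length xs - 1"
    unfolding gdist_def by (rule Least_le)
  with \<open>xs \<noteq> []\<close> show ?thesis
    by (cases xs) simp_all
qed

lemma shortest_walk:
  assumes "reachable V E x y"
  obtains xs where "is_walk V E xs" "hd xs = x" "last xs = y" "length xs = gdist V E x y + 1"
proof -
  obtain xs where "is_walk V E xs" "hd xs = x" "last xs = y"
    using assms by (auto simp: reachable_def)
  then have "\<exists>n xs. is_walk V E xs \<and> hd xs = x \<and> last xs = y \<and> length xs = n + 1"
    by (intro exI[of _ "length xs - 1"] exI[of _ xs]) (auto simp: is_walk_def)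
  then have "\<exists>xs. is_walk V E xs \<and> hd xs = x \<and> last xs = y \<and> length xs = gdist V E x y + 1"
    unfolding gdist_def by (rule LeastI_ex)
  with that show ?thesis
    by blast
qed

lemma gdist_self: "x \<in> V \<Longrightarrow> gdist V E x x = 0"
  using gdist_le_length[of V E "[x]" x x] by (simp add: is_walk_def)

lemma gdist_pos:
  assumes "reachable V E x y" "x \<noteq> y"
  shows "0 < gdist V E x y"
proof (rule ccontr)
  assume "\<not> 0 < gdist V E x y"
  moreover obtain xs where "hd xs = x" "last xs = y" "length xs = gdist V E x y + 1"
    using assms(1) by (rule shortest_walk)
  ultimately show False
    using assms(2) by (auto simp: length_Suc_conv)
qed

lemma gdist_edge:
  assumes "E x y" "x \<in> V" "y \<in> V" "x \<noteq> y"
  shows "gdist V E x y = 1"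
proof -
  have "gdist V E x y \<le> 1"
    using gdist_le_length[of V E "[x, y]" x y] assms by (simp add: is_walk_Cons_Cons is_walk_def)
  moreover have "0 < gdist V E x y"
    using assms by (simp add: gdist_pos reachable_edge)
  ultimately show ?thesis
    by simp
qed

lemma gdist_Cons_le:
  assumes "E x z" "x \<in> V" "reachable V E z y"
  shows "gdist V E x y \<le> gdist V E z y + 1"
proof -
  obtain xs where "is_walk V E xs" "hd xs = z" "last xs = y" "length xs = gdist V E z y + 1"
    using assms(3) by (rule shortest_walk)
  with assms(1,2) show ?thesis
    using gdist_le_length[of V E "x # xs" x y]
    by (cases xs) (simp_all add: is_walk_Cons_Cons)
qed

lemma gdist_snoc_le:
  assumes "reachable V E x z" "E z y" "y \<in> V"
  shows "gdist V E x y \<le> gdist V E x z + 1"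
proof -
  obtain xs where xs: "is_walk V E xs" "hd xs = x" "last xs = z" "length xs = gdist V E x z + 1"
    using assms(1) by (rule shortest_walk)
  then have "xs \<noteq> []"
    by (simp add: is_walk_def)
  with xs assms(2,3) show ?thesis
    using gdist_le_length[of V E "xs @ [y]" x y] by (simp add: is_walk_snoc)
qed

lemma gdist_first_step:
  assumes "reachable V E x y" "x \<noteq> y"
  obtains z where "E x z" "reachable V E z y" "gdist V E z y + 1 \<le> gdist V E x y"
proof -
  obtain xs where xs: "is_walk V E xs" "hd xs = x" "last xs = y" "length xs = gdist V E x y + 1"
    using assms(1) by (rule shortest_walk)
  with assms(2) obtain z zs where "xs = x # z # zs"
    by (cases xs; cases "tl xs") auto
  with xs have "E x z" "is_walk V E (z # zs)" "last (z # zs) = y"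
    by (simp_all add: is_walk_Cons_Cons)
  moreover from this have "gdist V E z y + 1 \<le> length (z # zs)"
    by (intro gdist_le_length) simp_all
  ultimately show ?thesis
    using that xs(4) \<open>xs = x # z # zs\<close> unfolding reachable_def by fastforce
qed

lemma reachable_avoiding_if_gdist_less:
  assumes "reachable V E x t" "gdist V E x t < gdist V E x c + gdist V E c t"
  shows "reachable (V - {c}) (del_vertices_edges E {c}) x t"
proof -
  obtain xs where xs: "is_walk V E xs" "hd xs = x" "last xs = t" "length xs = gdist V E x t + 1"
    using assms(1) by (rule shortest_walk)
  have "c \<notin> set xs"
  proof
    assume "c \<in> set xs"
    then obtain j where j: "j < length xs" "xs ! j = c"
      by (auto simp: in_set_conv_nth)
    have "last (take (Suc j) xs) = c"
      using j by (simp add: take_Suc_conv_app_nth)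
    then have "gdist V E x c + 1 \<le> length (take (Suc j) xs)"
      using xs by (intro gdist_le_length is_walk_take) simp_all
    moreover have "gdist V E c t + 1 \<le> length (drop j xs)"
      using xs j by (intro gdist_le_length is_walk_drop) (simp_all add: hd_drop_conv_nth)
    ultimately show False
      using assms(2) xs(4) j(1) by simp
  qed
  with xs show ?thesis
    unfolding reachable_def is_walk_del_vertices by auto
qed

section \<open>Concave and convex sequences\<close>

lemma unimodal_if_concave:
  fixes s :: "nat \<Rightarrow> int"
  assumes concave: "\<And>i. i + 2 \<le> k \<Longrightarrow> s i + s (i + 2) \<le> 2 * s (i + 1)"
  shows "unimodal s k"
proof -
  \<comment> \<open>\<open>t\<close> is the first descent; concavity keeps every later difference below the one at \<open>t\<close>\<close>
  define t where "t = (LEAST t. t = k \<or> (t < k \<and> s (Suc t) < s t))"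
  have "t = k \<or> (t < k \<and> s (Suc t) < s t)"
    unfolding t_def by (rule LeastI[of _ k]) simp
  then have t_le: "t \<le> k" and drop_at_t: "t < k \<Longrightarrow> s (Suc t) < s t"
    by auto
  have rise: "s m \<le> s (Suc m)" if "m < t" for m
    using not_less_Least[of m "\<lambda>t. t = k \<or> (t < k \<and> s (Suc t) < s t)"] that t_le
    unfolding t_def[symmetric] by auto
  have "s (Suc m) - s m \<le> s (Suc t) - s t" if "t \<le> m" "m < k" for m
    using that
  proof (induction m rule: dec_induct)
    case (step n)
    then show ?case
      using concave[of n] by simp
  qed simp
  then have fall: "s (Suc m) \<le> s m" if "t \<le> m" "m < k" for m
    using that drop_at_t by fastforce
  have "s i \<le> s j" if "i \<le> j" "j \<le> t" for i j
    using that by (induction j rule: dec_induct) (auto intro: order_trans[OF _ rise])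
  moreover have "s j \<le> s i" if "t \<le> i" "i \<le> j" "j \<le> k" for i j
    using that(2,1,3) by (induction j rule: dec_induct) (auto intro: order_trans[OF fall])
  ultimately show ?thesis
    unfolding unimodal_def using t_le by blast
qed

lemma inv_unimodal_iff_unimodal_uminus:
  fixes s :: "nat \<Rightarrow> 'a::linordered_ab_group_add"
  shows "inv_unimodal s k \<longleftrightarrow> unimodal (\<lambda>i. - s i) k"
  by (simp add: unimodal_def inv_unimodal_def)

lemma inv_unimodal_if_convex:
  fixes s :: "nat \<Rightarrow> int"
  assumes "\<And>i. i + 2 \<le> k \<Longrightarrow> 2 * s (i + 1) \<le> s i + s (i + 2)"
  shows "inv_unimodal s k"
  unfolding inv_unimodal_iff_unimodal_uminus
proof (rule unimodal_if_concave)
  fix i assume "i + 2 \<le> k"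
  then show "- s i + - s (i + 2) \<le> 2 * - s (i + 1)"
    using assms[of i] by linarith
qed

lemma unimodal_of_nat_iff: "unimodal (\<lambda>i. int (s i)) k \<longleftrightarrow> unimodal s k"
  by (simp add: unimodal_def)

lemma inv_unimodal_of_nat_iff: "inv_unimodal (\<lambda>i. int (s i)) k \<longleftrightarrow> inv_unimodal s k"
  by (simp add: inv_unimodal_def)

section \<open>Transmissions around a vertex of degree two\<close>

locale degree_two_vertex =
  fixes V :: "'a set" and E :: "'a \<Rightarrow> 'a \<Rightarrow> bool" and a c b :: 'a
  assumes simple: "simple_graph V E"
    and connected: "graph_connected V E"
    and neighbours: "{y \<in> V. E c y} = {a, b}"
    and distinct_neighbours: "a \<noteq> b"
begin

abbreviation "d \<equiv> gdist V E"

definition gap :: "'a \<Rightarrow> int" where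
  "gap y = int (d b y) - int (d a y)"

lemmas edge_sym = simple_graph_edge_sym[OF simple]
  and edge_in_V = simple_graph_edge_in_V[OF simple]

lemma vertices_reachable: "x \<in> V \<Longrightarrow> y \<in> V \<Longrightarrow> reachable V E x y"
  using connected by (simp add: graph_connected_def)

lemma centre_edges: "E c a" "E c b" "E a c" "E b c"
  using neighbours by (auto intro: edge_sym)

lemma in_V: "a \<in> V" "b \<in> V" "c \<in> V"
  using centre_edges edge_in_V by blast+

lemma neighbours_ne_centre: "a \<noteq> c" "b \<noteq> c"
  using simple centre_edges by (auto simp: simple_graph_def)

lemma gdist_neighbours_centre: "d a c = 1" "d b c = 1"
  using centre_edges in_V neighbours_ne_centre by (simp_all add: gdist_edge)

lemma gdist_centre:
  assumes "y \<in> V" "y \<noteq> c"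
  shows "d c y = min (d a y) (d b y) + 1"
proof -
  obtain z where z: "E c z" "reachable V E z y" "d z y + 1 \<le> d c y"
    using gdist_first_step[OF vertices_reachable[OF in_V(3) assms(1)]] assms(2) by metis
  have "z = a \<or> z = b"
    using neighbours z(1) edge_in_V by blast
  moreover have "d c y \<le> d a y + 1" "d c y \<le> d b y + 1"
    using centre_edges in_V assms(1) by (meson gdist_Cons_le vertices_reachable)+
  ultimately show ?thesis
    using z(3) by auto
qed

lemma abs_gap_le:
  assumes "y \<in> V" "y \<noteq> c"
  shows "\<bar>gap y\<bar> \<le> 2"
proof -
  have "d a y \<le> d c y + 1" "d b y \<le> d c y + 1"
    using centre_edges in_V assms(1) by (meson gdist_Cons_le vertices_reachable)+
  then show ?thesis
    using gdist_centre[OF assms] by (simp add: gap_def)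
qed

lemma gap_edge_le:
  assumes "E u v" "u \<in> V" "v \<in> V"
  shows "gap u - gap v \<le> 2"
proof -
  have "d a v \<le> d a u + 1" "d b u \<le> d b v + 1"
    using assms in_V by (meson edge_sym gdist_snoc_le vertices_reachable)+
  then show ?thesis
    by (simp add: gap_def)
qed

lemma transmission_second_difference:
  "int (transmission V E a) + int (transmission V E b) - 2 * int (transmission V E c)
     = 2 + (\<Sum>y\<in>V - {c}. \<bar>gap y\<bar> - 2)"
proof -
  let ?h = "\<lambda>y. int (d a y) + int (d b y) - 2 * int (d c y)"
  have "finite V"
    using simple by (simp add: simple_graph_def)
  have "int (transmission V E a) + int (transmission V E b) - 2 * int (transmission V E c)
      = (\<Sum>y\<in>V. ?h y)"
    by (simp add: transmission_def sum.distrib sum_subtractf sum_distrib_left)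
  also have "\<dots> = ?h c + (\<Sum>y\<in>V - {c}. ?h y)"
    using \<open>finite V\<close> in_V(3) by (rule sum.remove)
  also have "?h c = 2"
    using gdist_neighbours_centre in_V by (simp add: gdist_self)
  also have "(\<Sum>y\<in>V - {c}. ?h y) = (\<Sum>y\<in>V - {c}. \<bar>gap y\<bar> - 2)"
    by (rule sum.cong) (auto simp: gdist_centre gap_def)
  finally show ?thesis .
qed

lemma small_gaps_if_bypass:
  assumes bypass: "reachable (V - {c}) (del_vertices_edges E {c}) a b"
  shows "(\<exists>y\<in>V - {c}. gap y = 0)
    \<or> (\<exists>y\<in>V - {c}. \<exists>y'\<in>V - {c}. y \<noteq> y' \<and> \<bar>gap y\<bar> = 1 \<and> \<bar>gap y'\<bar> = 1)"
proof (rule ccontr)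
  assume no_small_gaps: "\<not> ?thesis"
  \<comment> \<open>then the gap, which moves by at most 2 along an edge, keeps its sign on a path avoiding \<open>c\<close>\<close>
  have "0 < gap b"
    using bypass
  proof (rule reachable_closed[where P = "\<lambda>y. 0 < gap y"])
    show "0 < gap a"
      using gdist_pos[OF vertices_reachable] in_V distinct_neighbours by (simp add: gap_def gdist_self)
  next
    fix u v assume "0 < gap u" "del_vertices_edges E {c} u v" "v \<in> V - {c}"
    then have uv: "E u v" "u \<in> V - {c}" "v \<in> V - {c}"
      by (auto simp: del_vertices_edges_def dest: edge_in_V)
    show "0 < gap v"
    proof (rule ccontr)
      assume "\<not> 0 < gap v"
      with no_small_gaps uv have "gap v < 0"
        by force
      with gap_edge_le[of u v] uv \<open>0 < gap u\<close> have "gap u = 1" "gap v = -1"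
        by auto
      then have "u \<noteq> v"
        by auto
      with no_small_gaps uv \<open>gap u = 1\<close> \<open>gap v = -1\<close> show False
        by fastforce
    qed
  qed
  then show False
    using gdist_pos[OF vertices_reachable] in_V distinct_neighbours by (simp add: gap_def gdist_self)
qed

lemma transmission_concave_if_bypass:
  assumes "reachable (V - {c}) (del_vertices_edges E {c}) a b"
  shows "transmission V E a + transmission V E b \<le> 2 * transmission V E c"
proof -
  have "finite (V - {c})"
    using simple by (simp add: simple_graph_def)
  moreover have slack_nonneg: "0 \<le> 2 - \<bar>gap y\<bar>" if "y \<in> V - {c}" for y
    using abs_gap_le[of y] that by simp
  ultimately have "2 \<le> (\<Sum>y\<in>V - {c}. 2 - \<bar>gap y\<bar>)"
    using small_gaps_if_bypass[OF assms]
  proof (elim disjE bexE conjE)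
    fix y assume "y \<in> V - {c}" "gap y = 0"
    then show ?thesis
      using member_le_sum[of y "V - {c}" "\<lambda>y. 2 - \<bar>gap y\<bar>"] slack_nonneg \<open>finite (V - {c})\<close>
      by simp
  next
    fix y y' assume "y \<in> V - {c}" "y' \<in> V - {c}" "y \<noteq> y'" "\<bar>gap y\<bar> = 1" "\<bar>gap y'\<bar> = 1"
    then show ?thesis
      using sum_mono2[of "V - {c}" "{y, y'}" "\<lambda>y. 2 - \<bar>gap y\<bar>"] slack_nonneg \<open>finite (V - {c})\<close>
      by force
  qed
  moreover have "(\<Sum>y\<in>V - {c}. \<bar>gap y\<bar> - 2) = - (\<Sum>y\<in>V - {c}. 2 - \<bar>gap y\<bar>)"
    by (simp add: sum_negf[symmetric])
  ultimately show ?thesis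
    using transmission_second_difference by linarith
qed

lemma large_gaps_if_cut:
  assumes cut: "\<not> reachable (V - {c}) (del_vertices_edges E {c}) a b"
    and y: "y \<in> V - {c}"
  shows "2 \<le> \<bar>gap y\<bar>"
proof (rule ccontr)
  assume "\<not> ?thesis"
  then have "d a y \<le> d b y + 1" "d b y \<le> d a y + 1"
    unfolding gap_def by arith+
  then have "d a y < d a c + d c y" "d b y < d b c + d c y"
    using gdist_centre[of y] y gdist_neighbours_centre by simp_all
  then have a_y: "reachable (V - {c}) (del_vertices_edges E {c}) a y"
    and b_y: "reachable (V - {c}) (del_vertices_edges E {c}) b y"
    using y in_V by (simp_all add: vertices_reachable reachable_avoiding_if_gdist_less)
  have "reachable (V - {c}) (del_vertices_edges E {c}) a b"
    using reachable_trans[OF a_y reachable_sym[OF simple_graph_del_vertices[OF simple] b_y]] .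
  with cut show False ..
qed

lemma transmission_convex_if_cut:
  assumes "\<not> reachable (V - {c}) (del_vertices_edges E {c}) a b"
  shows "2 * transmission V E c \<le> transmission V E a + transmission V E b"
proof -
  have "0 \<le> (\<Sum>y\<in>V - {c}. \<bar>gap y\<bar> - 2)"
    using large_gaps_if_cut[OF assms] by (intro sum_nonneg) force
  then show ?thesis
    using transmission_second_difference by linarith
qed

end

section \<open>Internal paths\<close>

locale internal_path =
  fixes V :: "'a set" and E :: "'a \<Rightarrow> 'a \<Rightarrow> bool" and w :: "nat \<Rightarrow> 'a" and k :: nat
  assumes simple: "simple_graph V E"
    and connected: "graph_connected V E"
    and length_ge_2: "k \<ge> 2"
    and path_in_V: "\<forall>i\<le>k. w i \<in> V"
    and path_inj: "inj_on w {0..k}"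
    and path_edges: "\<forall>i<k. E (w i) (w (i + 1))"
    and interior_degree: "\<forall>i\<in>{1..k-1}. degree V E (w i) = 2"
begin

abbreviation "interior \<equiv> w ` {1..k-1}"

abbreviation "reachable_H \<equiv> reachable (V - interior) (del_vertices_edges E interior)"

lemmas edge_sym = simple_graph_edge_sym[OF simple]

lemma w_eq_iff: "i \<le> k \<Longrightarrow> j \<le> k \<Longrightarrow> w i = w j \<longleftrightarrow> i = j"
  using path_inj by (auto simp: inj_on_def)

lemma w_in_interior_iff: "j \<le> k \<Longrightarrow> w j \<in> interior \<longleftrightarrow> 0 < j \<and> j < k"
  using w_eq_iff by force

lemma ends_outside_interior: "w 0 \<in> V - interior" "w k \<in> V - interior"
  using path_in_V w_in_interior_iff[of 0] w_in_interior_iff[of k] by auto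

lemma interior_neighbours:
  assumes "0 < j" "j < k"
  shows "{y \<in> V. E (w j) y} = {w (j - 1), w (j + 1)}"
proof (rule card_subset_eq[symmetric])
  show "finite {y \<in> V. E (w j) y}"
    using simple by (simp add: simple_graph_def)
  have "E (w (j - 1)) (w j)" "E (w j) (w (j + 1))"
    using assms path_edges[rule_format, of "j - 1"] path_edges[rule_format, of j] by simp_all
  then show "{w (j - 1), w (j + 1)} \<subseteq> {y \<in> V. E (w j) y}"
    using assms path_in_V edge_sym by auto
  show "card {w (j - 1), w (j + 1)} = card {y \<in> V. E (w j) y}"
    using assms interior_degree w_eq_iff[of "j - 1" "j + 1"] by (simp add: degree_def)
qed

lemma interior_vertex_degree_two:
  "i + 2 \<le> k \<Longrightarrow> degree_two_vertex V E (w i) (w (i + 1)) (w (i + 2))"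
  using simple connected interior_neighbours[of "i + 1"] w_eq_iff[of i "i + 2"]
  by unfold_locales (simp_all add: numeral_2_eq_2)

lemma outside_neighbour_of_interior:
  assumes "E x (w l)" "0 < l" "l < k" "x \<notin> interior"
  shows "(l = 1 \<and> x = w 0) \<or> (l + 1 = k \<and> x = w k)"
proof -
  have "x = w (l - 1) \<or> x = w (l + 1)"
    using interior_neighbours[of l] assms simple edge_sym by (auto simp: simple_graph_def)
  then show ?thesis
  proof
    assume "x = w (l - 1)"
    with assms(3,4) have "\<not> (0 < l - 1 \<and> l - 1 < k)"
      using w_in_interior_iff[of "l - 1"] by (simp add: less_imp_diff_less)
    with assms(2,3) \<open>x = w (l - 1)\<close> show ?thesis
      by auto
  next
    assume "x = w (l + 1)"
    with assms(3,4) have "\<not> (0 < l + 1 \<and> l + 1 < k)"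
      using w_in_interior_iff[of "l + 1"] by (simp add: Suc_leI)
    with assms(3) have "l + 1 = k"
      by simp
    with \<open>x = w (l + 1)\<close> show ?thesis
      by auto
  qed
qed

lemma reachable_along_path:
  "j \<le> l \<Longrightarrow> l \<le> k \<Longrightarrow> w ` {j..l} \<inter> W = {}
    \<Longrightarrow> reachable (V - W) (del_vertices_edges E W) (w j) (w l)"
proof (induction l)
  case 0
  then show ?case
    using path_in_V by (simp add: reachable_refl)
next
  case (Suc l)
  show ?case
  proof (cases "j = Suc l")
    case True
    with Suc.prems path_in_V show ?thesis
      by (simp add: reachable_refl)
  next
    case False
    with Suc.prems have "j \<le> l" "\<forall>m\<in>{j..Suc l}. w m \<notin> W"
      by auto
    then have "reachable (V - W) (del_vertices_edges E W) (w j) (w l)"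
      using Suc.prems by (intro Suc.IH) auto
    moreover have "del_vertices_edges E W (w l) (w (Suc l))" "w (Suc l) \<in> V - W"
      using \<open>j \<le> l\<close> \<open>\<forall>m\<in>{j..Suc l}. w m \<notin> W\<close> Suc.prems path_in_V path_edges
      by (simp_all add: del_vertices_edges_def)
    ultimately show ?thesis
      by (rule reachable_step)
  qed
qed

lemma reachable_H_from_an_end:
  assumes "x \<in> V - interior"
  shows "reachable_H (w 0) x \<or> reachable_H (w k) x"
proof -
  have "reachable V E (w 0) x"
    using connected assms ends_outside_interior by (simp add: graph_connected_def)
  then have "x \<in> interior \<or> reachable_H (w 0) x \<or> reachable_H (w k) x"
  proof (rule reachable_closed)
    show "w 0 \<in> interior \<or> reachable_H (w 0) (w 0) \<or> reachable_H (w k) (w 0)"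
      using ends_outside_interior by (simp add: reachable_refl)
  next
    fix u v
    assume u: "u \<in> interior \<or> reachable_H (w 0) u \<or> reachable_H (w k) u" and "E u v" "v \<in> V"
    show "v \<in> interior \<or> reachable_H (w 0) v \<or> reachable_H (w k) v"
    proof (cases "v \<in> interior")
      case False
      show ?thesis
      proof (cases "u \<in> interior")
        case True
        then obtain l where "u = w l" "l \<in> {1..k-1}"
          by (rule imageE)
        then have "E v (w l)" "0 < l" "l < k"
          using \<open>E u v\<close> edge_sym length_ge_2 by auto
        with False have "v = w 0 \<or> v = w k"
          using outside_neighbour_of_interior by blast
        then show ?thesis
          using ends_outside_interior by (auto simp: reachable_refl)
      next
        case u_outside: False
        with \<open>E u v\<close> \<open>v \<in> V\<close> False
        have "del_vertices_edges E interior u v" "v \<in> V - interior"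
          by (simp_all add: del_vertices_edges_def)
        with u u_outside show ?thesis
          using reachable_step[of _ _ "w 0" u v] reachable_step[of _ _ "w k" u v] by blast
      qed
    qed simp
  qed
  with assms show ?thesis
    by blast
qed

lemma H_connected_iff:
  "graph_connected (V - interior) (del_vertices_edges E interior) \<longleftrightarrow> reachable_H (w 0) (w k)"
proof
  assume "graph_connected (V - interior) (del_vertices_edges E interior)"
  then show "reachable_H (w 0) (w k)"
    using ends_outside_interior by (simp add: graph_connected_def)
next
  assume ends: "reachable_H (w 0) (w k)"
  have from_w0: "reachable_H (w 0) x" if "x \<in> V - interior" for x
    using reachable_H_from_an_end[OF that] reachable_trans[OF ends, of x] by blast
  show "graph_connected (V - interior) (del_vertices_edges E interior)"
    unfolding graph_connected_def
  proof (intro conjI ballI)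
    show "V - interior \<noteq> {}"
      using ends_outside_interior by blast
  next
    fix x y assume "x \<in> V - interior" "y \<in> V - interior"
    then show "reachable_H x y"
      using reachable_trans[OF reachable_sym[OF simple_graph_del_vertices[OF simple] from_w0]]
        from_w0 by blast
  qed
qed

text \<open>If \<open>H\<close> is disconnected, this is the component of \<open>w i\<close> in \<open>G - w (i + 1)\<close>.\<close>

definition left_part :: "nat \<Rightarrow> 'a set" where
  "left_part i = w ` {1..i} \<union> {x. reachable_H (w 0) x}"

lemma path_vertex_in_left_part: "0 < j \<Longrightarrow> j \<le> i \<Longrightarrow> w j \<in> left_part i"
  unfolding left_part_def by (intro UnI1 imageI) simp

lemma left_part_closed:
  assumes "i + 2 \<le> k" "\<not> reachable_H (w 0) (w k)"
    and "u \<in> left_part i" "E u v" "v \<in> V" "v \<noteq> w (i + 1)"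
  shows "v \<in> left_part i"
proof -
  consider (path) j where "u = w j" "j \<in> {1..i}" | (H) "reachable_H (w 0) u"
    using assms(3) unfolding left_part_def by blast
  then show ?thesis
  proof cases
    case path
    with assms(1,4,5) have "v = w (j - 1) \<or> v = w (j + 1)"
      using interior_neighbours[of j] by auto
    then show ?thesis
    proof
      assume "v = w (j - 1)"
      show ?thesis
      proof (cases "j = 1")
        case True
        with \<open>v = w (j - 1)\<close> show ?thesis
          using ends_outside_interior by (simp add: left_part_def reachable_refl)
      next
        case False
        with path have "0 < j - 1" "j - 1 \<le> i"
          by auto
        with \<open>v = w (j - 1)\<close> show ?thesis
          by (simp add: path_vertex_in_left_part)
      qed
    next
      assume "v = w (j + 1)"
      with assms(6) have "j \<noteq> i"
        by auto
      with path \<open>v = w (j + 1)\<close> show ?thesis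
        by (simp add: path_vertex_in_left_part)
    qed
  next
    case H
    then have "u \<notin> interior"
      using reachable_in_V[OF H] by simp
    show ?thesis
    proof (cases "v \<in> interior")
      case True
      then obtain l where "v = w l" "l \<in> {1..k-1}"
        by (rule imageE)
      with assms(4) length_ge_2 have "E u (w l)" "0 < l" "l < k"
        by auto
      then have "(l = 1 \<and> u = w 0) \<or> (l + 1 = k \<and> u = w k)"
        using \<open>u \<notin> interior\<close> by (rule outside_neighbour_of_interior)
      then show ?thesis
      proof
        assume "l = 1 \<and> u = w 0"
        with \<open>v = w l\<close> assms(6) have "i \<noteq> 0"
          by (cases i) auto
        with \<open>l = 1 \<and> u = w 0\<close> \<open>v = w l\<close> show ?thesis
          by (simp add: path_vertex_in_left_part)
      next
        assume "l + 1 = k \<and> u = w k"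
        with H assms(2) show ?thesis
          by simp
      qed
    next
      case False
      with assms(4,5) \<open>u \<notin> interior\<close>
      have "del_vertices_edges E interior u v" "v \<in> V - interior"
        by (simp_all add: del_vertices_edges_def)
      with H have "reachable_H (w 0) v"
        by (rule reachable_step)
      then show ?thesis
        by (simp add: left_part_def)
    qed
  qed
qed

lemma right_neighbour_notin_left_part:
  assumes "i + 2 \<le> k" "\<not> reachable_H (w 0) (w k)"
  shows "w (i + 2) \<notin> left_part i"
proof
  assume "w (i + 2) \<in> left_part i"
  then consider (path) j where "w (i + 2) = w j" "j \<in> {1..i}" | (H) "reachable_H (w 0) (w (i + 2))"
    unfolding left_part_def by blast
  then show False
  proof cases
    case path
    with assms(1) w_eq_iff[of "i + 2" j] show False
      by simp
  next
    case H
    then have "w (i + 2) \<notin> interior"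
      using reachable_in_V[OF H] by simp
    with assms(1) have "i + 2 = k"
      using w_in_interior_iff[of "i + 2"] by simp
    with H assms(2) show False
      by simp
  qed
qed

lemma bypass_iff:
  assumes "i + 2 \<le> k"
  shows "reachable (V - {w (i + 1)}) (del_vertices_edges E {w (i + 1)}) (w i) (w (i + 2))
    \<longleftrightarrow> reachable_H (w 0) (w k)"
proof
  let ?reachable_c = "reachable (V - {w (i + 1)}) (del_vertices_edges E {w (i + 1)})"
  assume "reachable_H (w 0) (w k)"
  moreover have "{w (i + 1)} \<subseteq> interior"
    using assms by auto
  ultimately have middle: "?reachable_c (w 0) (w k)"
    by (rule reachable_del_vertices_mono)
  have left: "?reachable_c (w 0) (w i)" and right: "?reachable_c (w (i + 2)) (w k)"
    using assms w_eq_iff[of _ "i + 1"] by (auto intro!: reachable_along_path)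
  note sym = reachable_sym[OF simple_graph_del_vertices[OF simple]]
  show "?reachable_c (w i) (w (i + 2))"
    using reachable_trans[OF reachable_trans[OF sym[OF left] middle] sym[OF right]] .
next
  assume bypass: "reachable (V - {w (i + 1)}) (del_vertices_edges E {w (i + 1)}) (w i) (w (i + 2))"
  show "reachable_H (w 0) (w k)"
  proof (rule ccontr)
    assume not_H: "\<not> reachable_H (w 0) (w k)"
    have "w (i + 2) \<in> left_part i"
      using bypass
    proof (rule reachable_closed)
      show "w i \<in> left_part i"
        using ends_outside_interior path_vertex_in_left_part[of i i]
        by (cases i) (simp_all add: left_part_def reachable_refl)
    next
      fix u v
      assume u: "u \<in> left_part i"
        and "del_vertices_edges E {w (i + 1)} u v" "v \<in> V - {w (i + 1)}"
      then have "E u v" "v \<in> V" "v \<noteq> w (i + 1)"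
        by (auto simp: del_vertices_edges_def)
      with assms not_H u show "v \<in> left_part i"
        by (rule left_part_closed)
    qed
    with assms not_H show False
      using right_neighbour_notin_left_part by blast
  qed
qed

end

theorem theorem1:
  fixes V :: "'a set" and E :: "'a \<Rightarrow> 'a \<Rightarrow> bool" and w :: "nat \<Rightarrow> 'a" and k :: nat
  assumes "simple_graph V E"
    and "graph_connected V E"
    and "k \<ge> 2"
    and "\<forall>i\<le>k. w i \<in> V"
    and "inj_on w {0..k}"
    and "\<forall>i<k. E (w i) (w (i + 1))"
    and "\<forall>i\<in>{1..k-1}. degree V E (w i) = 2"
  shows "(graph_connected (V - w ` {1..k-1}) (del_vertices_edges E (w ` {1..k-1}))
            \<longrightarrow> unimodal (\<lambda>i. transmission V E (w i)) k)
       \<and> (\<not> graph_connected (V - w ` {1..k-1}) (del_vertices_edges E (w ` {1..k-1}))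
            \<longrightarrow> inv_unimodal (\<lambda>i. transmission V E (w i)) k)"
proof -
  interpret internal_path V E w k
    using assms by unfold_locales
  show ?thesis
  proof (intro conjI impI)
    assume "graph_connected (V - interior) (del_vertices_edges E interior)"
    then have "transmission V E (w i) + transmission V E (w (i + 2)) \<le> 2 * transmission V E (w (i + 1))"
      if "i + 2 \<le> k" for i
      using degree_two_vertex.transmission_concave_if_bypass[OF interior_vertex_degree_two[OF that]]
        bypass_iff[OF that] H_connected_iff by blast
    then show "unimodal (\<lambda>i. transmission V E (w i)) k"
      unfolding unimodal_of_nat_iff[symmetric] by (intro unimodal_if_concave) fastforce
  next
    assume "\<not> graph_connected (V - interior) (del_vertices_edges E interior)"
    then have "2 * transmission V E (w (i + 1)) \<le> transmission V E (w i) + transmission V E (w (i + 2))"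
      if "i + 2 \<le> k" for i
      using degree_two_vertex.transmission_convex_if_cut[OF interior_vertex_degree_two[OF that]]
        bypass_iff[OF that] H_connected_iff by blast
    then show "inv_unimodal (\<lambda>i. transmission V E (w i)) k"
      unfolding inv_unimodal_of_nat_iff[symmetric] by (intro inv_unimodal_if_convex) fastforce
  qed
qed

end
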